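(* Let $(H,\mathcal P)$ be a hypergraph colouring instance with pinnings, $H=(V,\mathcal E)$ with maximum degree $\Delta$, and let $k'\le k$ be integers with $k'\ge 2$ such that $k'\le|e|\le k$ for every $e\in\mathcal E$. Let $t\ge k$ and $q\ge(\mathrm e t\Delta)^{\frac{1}{k'-1}}$. Then for every $v\in V$ and every colour $c\in[q]$, $$\Pr_{\sigma\sim\mu_{\mathcal C}}[\sigma(v)=c]\le\frac1q\Big(1+\frac4t\Big).$$
   Context: A hypergraph $H=(V,\mathcal E)$ has finite vertex set $V$ and hyperedges $\mathcal E\subseteq 2^V$; its maximum degree $\Delta$ is the maximum number of hyperedges containing a single vertex. For $q\in\mathbb N$, a hypergraph colouring instance with pinnings is a pair $(H,\mathcal P)$ with $\mathcal P=\{P_e\subseteq[q]:e\in\mathcal E\}$ ($P_e$ is the set of colours already present in $e$). A colouring $\sigma\in[q]^V$ is proper if $|\{\sigma(u):u\in e\}\cup P_e|>1$ for every $e\in\mathcal E$. $\mathcal C$ is the set of proper colourings and $\mu_{\mathcal C}$ the uniform distribution on $\mathcal C$. $\mathrm e$ denotes Euler's number. *)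

theory Defs
  imports Complex_Main "HOL-Library.FuncSet"
begin

definition hypergraph :: "'a set \<Rightarrow> 'a set set \<Rightarrow> bool" where
  "hypergraph V E \<longleftrightarrow> finite V \<and> (\<forall>e\<in>E. e \<subseteq> V)"

definition vdegree :: "'a set set \<Rightarrow> 'a \<Rightarrow> nat" where
  "vdegree E v = card {e \<in> E. v \<in> e}"

definition max_degree :: "'a set \<Rightarrow> 'a set set \<Rightarrow> nat" where
  "max_degree V E = (if V = {} then 0 else Max (vdegree E ` V))"

text \<open>Colourings are functions V \<rightarrow> [q], extensional (undefined outside V).
  Pinnings: P e is the set of colours already present in hyperedge e.\<close>

definition proper_colourings ::
  "nat \<Rightarrow> 'a set \<Rightarrow> 'a set set \<Rightarrow> ('a set \<Rightarrow> nat set) \<Rightarrow> ('a \<Rightarrow> nat) set" where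
  "proper_colourings q V E P =
     {\<sigma> \<in> V \<rightarrow>\<^sub>E {1..q}. \<forall>e\<in>E. card (\<sigma> ` e \<union> P e) > 1}"

definition prob_colour ::
  "nat \<Rightarrow> 'a set \<Rightarrow> 'a set set \<Rightarrow> ('a set \<Rightarrow> nat set) \<Rightarrow> 'a \<Rightarrow> nat \<Rightarrow> real" where
  "prob_colour q V E P v c =
     real (card {\<sigma> \<in> proper_colourings q V E P. \<sigma> v = c})
       / real (card (proper_colourings q V E P))"

end

theory Submission
  imports Defs
begin

text \<open>
  Let \<open>E\<^sub>v\<close> be the edges avoiding \<open>v\<close>. Among the colourings that are proper on \<open>E\<^sub>v\<close>, the colour
  of \<open>v\<close> is unconstrained, so exactly a \<open>1/q\<close> fraction of them has \<open>\<sigma>(v) = c\<close>; the proper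
  colourings with \<open>\<sigma>(v) = c\<close> are among these. It remains to show that imposing the \<open>deg v \<le> \<Delta>\<close>
  edges at \<open>v\<close> keeps at least a \<open>(1 - x)\<^sup>\<Delta> \<ge> 1 - 1/t\<close> fraction, where \<open>x = 1/(t\<Delta>)\<close>.
  This is a counting form of the local lemma: by induction on \<open>S\<close>, an edge \<open>e \<notin> S\<close> is
  monochromatic in at most an \<open>x\<close> fraction of the colourings proper on \<open>S\<close>. Indeed, dropping
  from \<open>S\<close> the neighbours of \<open>e\<close> loses at most a factor \<open>(1 - x)\<^bsup>|\<Gamma>(e)|\<^esup>\<close>, and once the
  remaining edges are disjoint from \<open>e\<close>, at most \<open>q\<close> of the \<open>q\<^bsup>|e|\<^esup>\<close> colourings of \<open>e\<close> are
  monochromatic. The condition \<open>q\<^bsup>|e|-1\<^esup> x (1 - x)\<^bsup>|\<Gamma>(e)|\<^esup> \<ge> 1\<close> follows from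
  \<open>q\<^bsup>k'-1\<^esup> \<ge> exp 1 \<cdot> t\<Delta>\<close>, \<open>|\<Gamma>(e)| \<le> t\<Delta> - 1\<close> and \<open>(1 - x)\<^bsup>t\<Delta>-1\<^esup> \<ge> exp (-1)\<close>.
  Finally \<open>1/(1 - 1/t) \<le> 1 + 4/t\<close>.
\<close>

section \<open>Real inequalities\<close>

lemma exp_minus_one_le_power:
  fixes N :: real
  assumes "1 < N" and "real m \<le> N - 1"
  shows "exp (-1) \<le> (1 - 1 / N) ^ m"
proof -
  define a where "a = 1 - 1 / N"
  have "0 < a" and "a \<le> 1" using assms(1) by (auto simp: a_def field_simps)
  have "inverse a = 1 + 1 / (N - 1)" using assms(1) by (simp add: a_def field_simps)
  then have "- ln a = ln (1 + 1 / (N - 1))"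
    using \<open>0 < a\<close> by (metis ln_inverse)
  also have "\<dots> \<le> 1 / (N - 1)"
    using assms(1) by (intro ln_add_one_self_le_self) simp
  finally have "- ln a \<le> 1 / (N - 1)" .
  then have "-1 \<le> (N - 1) * ln a"
    using assms(1) by (simp add: field_simps)
  also have "\<dots> \<le> real m * ln a"
    using assms(2) \<open>0 < a\<close> \<open>a \<le> 1\<close> by (intro mult_right_mono_neg) auto
  finally have "exp (-1) \<le> exp (real m * ln a)" by simp
  also have "\<dots> = a ^ m"
    using \<open>0 < a\<close> by (simp add: exp_of_nat_mult)
  finally show ?thesis by (simp add: a_def)
qed

lemma le_power_of_powr_le:
  fixes a b :: real
  assumes "0 < a" and "2 \<le> n" and "a powr (1 / (real n - 1)) \<le> b"
  shows "a \<le> b ^ (n - 1)"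
proof -
  have "a = (a powr (1 / (real n - 1))) powr real (n - 1)"
    using assms(1,2) by (simp add: powr_powr of_nat_diff)
  also have "\<dots> = (a powr (1 / (real n - 1))) ^ (n - 1)"
    using assms(1) by (simp add: powr_realpow)
  also have "\<dots> \<le> b ^ (n - 1)"
    using assms(3) by (intro power_mono) auto
  finally show ?thesis .
qed

lemma local_lemma_condition:
  fixes N :: real
  assumes "1 < N" and "exp 1 * N \<le> real q ^ (k' - 1)" and "k' \<le> s" and "1 \<le> q"
    and "real m \<le> N - 1"
  shows "1 \<le> real q ^ (s - 1) * (1 / N) * (1 - 1 / N) ^ m"
proof -
  have "real q ^ (k' - 1) \<le> real q ^ (s - 1)"
    using assms(3,4) by (intro power_increasing) auto
  with assms(2) have "exp 1 * N \<le> real q ^ (s - 1)" by linarith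
  have "1 = exp 1 * N * (1 / N) * exp (-1)"
    using assms(1) by (simp add: exp_minus)
  also have "\<dots> \<le> real q ^ (s - 1) * (1 / N) * exp (-1)"
    using \<open>exp 1 * N \<le> real q ^ (s - 1)\<close> assms(1) by (intro mult_right_mono) auto
  also have "\<dots> \<le> real q ^ (s - 1) * (1 / N) * (1 - 1 / N) ^ m"
    using exp_minus_one_le_power[OF assms(1,5)] assms(1) by (intro mult_left_mono) auto
  finally show ?thesis .
qed

lemma one_div_mult_le_one:
  fixes t :: real
  assumes "1 \<le> t"
  shows "1 / (t * real D) \<le> 1"
proof (cases "D = 0")
  case False
  then have "1 \<le> t * real D"
    using assms mult_mono[of 1 t 1 "real D"] by simp
  then show ?thesis by simp
qed simp

lemma one_minus_inverse_le_power:
  fixes t :: real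
  assumes "1 \<le> t" and "d \<le> D"
  shows "1 - 1 / t \<le> (1 - 1 / (t * real D)) ^ d"
proof (cases "D = 0")
  case True
  then show ?thesis using assms by simp
next
  case False
  have "1 - 1 / t = 1 + real D * (- (1 / (t * real D)))"
    using False assms(1) by (simp add: field_simps)
  also have "\<dots> \<le> (1 - 1 / (t * real D)) ^ D"
    using Bernoulli_inequality[of "- (1 / (t * real D))" D] one_div_mult_le_one[OF assms(1)] by simp
  also have "\<dots> \<le> (1 - 1 / (t * real D)) ^ d"
    using one_div_mult_le_one[OF assms(1)] assms by (intro power_decreasing) auto
  finally show ?thesis .
qed

lemma divide_le_of_count_bounds:
  fixes a b b' r t :: real
  assumes "2 \<le> t" and "0 < r" and "0 \<le> a" and "a * r \<le> b'" and "(1 - 1 / t) * b' \<le> b"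
  shows "a / b \<le> 1 / r * (1 + 4 / t)"
proof (cases "b = 0")
  case True
  then show ?thesis using assms(1,2) by simp
next
  case False
  have "0 < 1 - 1 / t" using assms(1) by simp
  have "a * (r * (1 - 1 / t)) = a * r * (1 - 1 / t)"
    by (rule mult.assoc[symmetric])
  also have "\<dots> \<le> b' * (1 - 1 / t)"
    using assms(4) \<open>0 < 1 - 1 / t\<close> by (intro mult_right_mono) auto
  also have "\<dots> \<le> b"
    using assms(5) by (simp only: mult.commute)
  finally have bound: "a * (r * (1 - 1 / t)) \<le> b" .
  have "0 < r * (1 - 1 / t)" using assms(2) \<open>0 < 1 - 1 / t\<close> by simp
  then have "0 < b" using bound assms(3) False by (smt (verit) mult_nonneg_nonneg)
  then have "a / b \<le> 1 / (r * (1 - 1 / t))"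
    using bound \<open>0 < r * (1 - 1 / t)\<close> by (simp add: divide_simps mult.commute)
  also have "\<dots> \<le> 1 / r * (1 + 4 / t)"
  proof -
    have "1 \<le> (1 - 1 / t) * (1 + 4 / t)"
      using assms(1) by (simp add: field_simps)
    then show ?thesis
      using assms(1,2) by (simp add: field_simps)
  qed
  finally show ?thesis .
qed

section \<open>Counting extensional functions\<close>

lemma card_PiE_independent:
  assumes "W \<subseteq> V"
    and A: "\<And>\<sigma> \<tau>. (\<forall>x\<in>W. \<sigma> x = \<tau> x) \<Longrightarrow> A \<sigma> = A \<tau>"
    and B: "\<And>\<sigma> \<tau>. (\<forall>x\<in>V - W. \<sigma> x = \<tau> x) \<Longrightarrow> B \<sigma> = B \<tau>"
  shows "card {\<sigma> \<in> V \<rightarrow>\<^sub>E Q. A \<sigma> \<and> B \<sigma>}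
           = card {\<alpha> \<in> W \<rightarrow>\<^sub>E Q. A \<alpha>} * card {\<beta> \<in> V - W \<rightarrow>\<^sub>E Q. B \<beta>}"
proof -
  let ?X = "{\<sigma> \<in> V \<rightarrow>\<^sub>E Q. A \<sigma> \<and> B \<sigma>}"
  let ?split = "\<lambda>\<sigma>. (restrict \<sigma> W, restrict \<sigma> (V - W))"
  have inj: "inj_on ?split ?X"
  proof (rule inj_onI)
    fix \<sigma> \<tau> assume "\<sigma> \<in> ?X" "\<tau> \<in> ?X" "?split \<sigma> = ?split \<tau>"
    then have \<sigma>: "\<sigma> \<in> V \<rightarrow>\<^sub>E Q" and \<tau>: "\<tau> \<in> V \<rightarrow>\<^sub>E Q"
      and W: "restrict \<sigma> W = restrict \<tau> W" and VW: "restrict \<sigma> (V - W) = restrict \<tau> (V - W)"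
      by blast+
    have "\<sigma> x = \<tau> x" for x
    proof (cases "x \<in> V")
      case True
      then show ?thesis using fun_cong[OF W, of x] fun_cong[OF VW, of x] by (cases "x \<in> W") auto
    next
      case False
      then show ?thesis using PiE_arb[OF \<sigma> False] PiE_arb[OF \<tau> False] by simp
    qed
    then show "\<sigma> = \<tau>" ..
  qed
  have image: "?split ` ?X = {\<alpha> \<in> W \<rightarrow>\<^sub>E Q. A \<alpha>} \<times> {\<beta> \<in> V - W \<rightarrow>\<^sub>E Q. B \<beta>}"
  proof (intro equalityI subsetI)
    fix p assume "p \<in> ?split ` ?X"
    then obtain \<sigma> where "\<sigma> \<in> ?X" and p: "p = ?split \<sigma>" by blast
    moreover have "A (restrict \<sigma> W) = A \<sigma>" by (rule A) simp
    moreover have "B (restrict \<sigma> (V - W)) = B \<sigma>" by (rule B) simp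
    ultimately show "p \<in> {\<alpha> \<in> W \<rightarrow>\<^sub>E Q. A \<alpha>} \<times> {\<beta> \<in> V - W \<rightarrow>\<^sub>E Q. B \<beta>}"
      using assms(1) by auto
  next
    fix p assume p: "p \<in> {\<alpha> \<in> W \<rightarrow>\<^sub>E Q. A \<alpha>} \<times> {\<beta> \<in> V - W \<rightarrow>\<^sub>E Q. B \<beta>}"
    then obtain \<alpha> \<beta> where "p = (\<alpha>, \<beta>)" and \<alpha>: "\<alpha> \<in> W \<rightarrow>\<^sub>E Q" "A \<alpha>" and \<beta>: "\<beta> \<in> V - W \<rightarrow>\<^sub>E Q" "B \<beta>"
      by blast
    define \<sigma> where "\<sigma> x = (if x \<in> W then \<alpha> x else \<beta> x)" for x
    have "A \<sigma>" using \<alpha>(2) A[of \<sigma> \<alpha>] by (simp add: \<sigma>_def)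
    moreover have "B \<sigma>" using \<beta>(2) B[of \<sigma> \<beta>] by (simp add: \<sigma>_def)
    moreover have "\<sigma> \<in> V \<rightarrow>\<^sub>E Q"
      using \<alpha>(1) \<beta>(1) assms(1) by (auto simp: \<sigma>_def PiE_iff extensional_def)
    moreover have "restrict \<sigma> W = \<alpha>" and "restrict \<sigma> (V - W) = \<beta>"
      by (auto simp: \<sigma>_def PiE_arb[OF \<alpha>(1)] PiE_arb[OF \<beta>(1)])
    ultimately show "p \<in> ?split ` ?X"
      using \<open>p = (\<alpha>, \<beta>)\<close> by force
  qed
  have "card ?X = card (?split ` ?X)"
    using inj by (rule card_image[symmetric])
  also have "\<dots> = card {\<alpha> \<in> W \<rightarrow>\<^sub>E Q. A \<alpha>} * card {\<beta> \<in> V - W \<rightarrow>\<^sub>E Q. B \<beta>}"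
    unfolding image by (rule card_cartesian_product)
  finally show ?thesis .
qed

lemma card_PiE_constant_on_le:
  assumes "x\<^sub>0 \<in> I" and "finite I" and "finite C" and "finite Q"
  shows "card {\<alpha> \<in> I \<rightarrow>\<^sub>E Q. card (\<alpha> ` I \<union> C) \<le> 1} \<le> card Q"
proof (rule card_inj_on_le)
  show "inj_on (\<lambda>\<alpha>. \<alpha> x\<^sub>0) {\<alpha> \<in> I \<rightarrow>\<^sub>E Q. card (\<alpha> ` I \<union> C) \<le> 1}"
  proof (rule inj_onI)
    fix \<alpha> \<beta>
    assume "\<alpha> \<in> {\<alpha> \<in> I \<rightarrow>\<^sub>E Q. card (\<alpha> ` I \<union> C) \<le> 1}"
      and "\<beta> \<in> {\<alpha> \<in> I \<rightarrow>\<^sub>E Q. card (\<alpha> ` I \<union> C) \<le> 1}" and "\<alpha> x\<^sub>0 = \<beta> x\<^sub>0"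
    then have \<alpha>: "\<alpha> \<in> I \<rightarrow>\<^sub>E Q" "card (\<alpha> ` I \<union> C) \<le> 1"
      and \<beta>: "\<beta> \<in> I \<rightarrow>\<^sub>E Q" "card (\<beta> ` I \<union> C) \<le> 1"
      by blast+
    have const: "\<gamma> x = \<gamma> x\<^sub>0" if "card (\<gamma> ` I \<union> C) \<le> 1" "x \<in> I" for \<gamma> x
    proof -
      have "\<forall>a\<in>\<gamma> ` I \<union> C. \<forall>b\<in>\<gamma> ` I \<union> C. a = b"
        using that(1) assms(2,3) card_le_Suc0_iff_eq[of "\<gamma> ` I \<union> C"] by simp
      then show ?thesis using that(2) assms(1) by blast
    qed
    have "\<alpha> x = \<beta> x" for x
    proof (cases "x \<in> I")
      case True
      then show ?thesis using const[OF \<alpha>(2)] const[OF \<beta>(2)] \<open>\<alpha> x\<^sub>0 = \<beta> x\<^sub>0\<close> by simp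
    next
      case False
      then show ?thesis using PiE_arb[OF \<alpha>(1) False] PiE_arb[OF \<beta>(1) False] by simp
    qed
    then show "\<alpha> = \<beta>" ..
  qed
qed (use assms(1,4) in \<open>auto intro: PiE_mem\<close>)

section \<open>Hypergraph degrees\<close>

lemma finite_edges: "hypergraph V E \<Longrightarrow> finite E"
  unfolding hypergraph_def by (meson Pow_iff finite_Pow_iff rev_finite_subset subsetI)

lemma vdegree_le_max_degree: "finite V \<Longrightarrow> u \<in> V \<Longrightarrow> vdegree E u \<le> max_degree V E"
  by (auto simp: max_degree_def)

definition neighbour_edges :: "'a set set \<Rightarrow> 'a set \<Rightarrow> 'a set set" where
  "neighbour_edges E e = {f \<in> E. f \<noteq> e \<and> f \<inter> e \<noteq> {}}"

lemma card_neighbour_edges_le: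
  assumes "finite E" and "e \<in> E" and "finite e" and "\<forall>u\<in>e. vdegree E u \<le> D"
  shows "card (neighbour_edges E e) \<le> card e * (D - 1)"
proof -
  have "neighbour_edges E e \<subseteq> (\<Union>u\<in>e. {f \<in> E. u \<in> f} - {e})"
    unfolding neighbour_edges_def by blast
  then have "card (neighbour_edges E e) \<le> card (\<Union>u\<in>e. {f \<in> E. u \<in> f} - {e})"
    using assms(1,3) by (intro card_mono) auto
  also have "\<dots> \<le> (\<Sum>u\<in>e. card ({f \<in> E. u \<in> f} - {e}))"
    using assms(3) by (rule card_UN_le)
  also have "\<dots> \<le> (\<Sum>u\<in>e. D - 1)"
  proof (rule sum_mono)
    fix u assume "u \<in> e"
    then have "card ({f \<in> E. u \<in> f} - {e}) = vdegree E u - 1"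
      using assms(1,2) by (simp add: vdegree_def card_Diff_singleton)
    then show "card ({f \<in> E. u \<in> f} - {e}) \<le> D - 1"
      using assms(4) \<open>u \<in> e\<close> diff_le_mono[of "vdegree E u" D 1] by simp
  qed
  finally show ?thesis by simp
qed

lemma local_lemma_condition_hypergraph:
  fixes V :: "'a set" and E :: "'a set set" and t :: real
  defines "D \<equiv> max_degree V E"
  assumes "hypergraph V E" and "\<forall>e\<in>E. k' \<le> card e \<and> card e \<le> k"
    and "2 \<le> k'" and "real k \<le> t" and "(exp 1 * t * real D) powr (1 / (real k' - 1)) \<le> real q"
    and "1 \<le> q" and "e \<in> E"
  shows "1 \<le> real q ^ (card e - 1) * (1 / (t * real D))
               * (1 - 1 / (t * real D)) ^ card (neighbour_edges E e)"
proof -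
  have "finite V" and "e \<subseteq> V"
    using assms(2,8) by (auto simp: hypergraph_def)
  then have "finite e" by (rule finite_subset[rotated])
  have "finite E" using assms(2) by (rule finite_edges)
  have "card e \<le> k" and "2 \<le> card e" using assms(3,4,8) by auto
  then have "real (card e) \<le> t" and "2 \<le> t" using assms(5) by linarith+
  have degree: "\<forall>u\<in>e. vdegree E u \<le> D"
    using vdegree_le_max_degree[OF \<open>finite V\<close>] \<open>e \<subseteq> V\<close> unfolding D_def by blast
  have "e \<noteq> {}" using assms(3,4,8) by force
  then obtain u where "u \<in> e" by blast
  then have "1 \<le> vdegree E u"
    using \<open>finite E\<close> assms(8) by (auto simp: vdegree_def card_gt_0_iff Suc_le_eq)
  then have "1 \<le> D" using degree \<open>u \<in> e\<close> by fastforce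
  have "real (card (neighbour_edges E e)) \<le> real (card e * (D - 1))"
    using card_neighbour_edges_le[OF \<open>finite E\<close> assms(8) \<open>finite e\<close> degree] by linarith
  also have "\<dots> \<le> t * (real D - 1)"
    using \<open>real (card e) \<le> t\<close> \<open>1 \<le> D\<close> by (simp add: of_nat_diff mult_right_mono)
  also have "\<dots> \<le> t * real D - 1"
    using \<open>2 \<le> t\<close> by (simp add: algebra_simps)
  finally have neighbours: "real (card (neighbour_edges E e)) \<le> t * real D - 1" .
  have "2 \<le> t * real D"
    using \<open>2 \<le> t\<close> \<open>1 \<le> D\<close> mult_mono[of 2 t 1 "real D"] by simp
  moreover have "exp 1 * (t * real D) \<le> real q ^ (k' - 1)"
    using le_power_of_powr_le[OF _ assms(4,6)] \<open>2 \<le> t * real D\<close> by (simp add: mult.assoc)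
  ultimately show ?thesis
    using neighbours assms(3,7,8) by (intro local_lemma_condition[of _ q k']) auto
qed

section \<open>Colourings proper on a set of edges\<close>

definition proper_on :: "nat \<Rightarrow> 'a set \<Rightarrow> ('a set \<Rightarrow> nat set) \<Rightarrow> 'a set set \<Rightarrow> ('a \<Rightarrow> nat) set" where
  "proper_on q V P S = {\<sigma> \<in> V \<rightarrow>\<^sub>E {1..q}. \<forall>f\<in>S. 1 < card (\<sigma> ` f \<union> P f)}"

definition monochromatic_in ::
  "nat \<Rightarrow> 'a set \<Rightarrow> ('a set \<Rightarrow> nat set) \<Rightarrow> 'a set set \<Rightarrow> 'a set \<Rightarrow> ('a \<Rightarrow> nat) set" where
  "monochromatic_in q V P S e = {\<sigma> \<in> proper_on q V P S. card (\<sigma> ` e \<union> P e) \<le> 1}"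

lemma proper_colourings_eq_proper_on: "proper_colourings q V E P = proper_on q V P E"
  by (simp add: proper_colourings_def proper_on_def)

lemma finite_proper_on: "finite V \<Longrightarrow> finite (proper_on q V P S)"
  unfolding proper_on_def by (rule finite_subset[of _ "V \<rightarrow>\<^sub>E {1..q}"]) (auto intro: finite_PiE)

lemma finite_monochromatic_in: "finite V \<Longrightarrow> finite (monochromatic_in q V P S e)"
  unfolding monochromatic_in_def by (rule finite_subset[OF _ finite_proper_on]) auto

lemma proper_on_antimono: "S \<subseteq> T \<Longrightarrow> proper_on q V P T \<subseteq> proper_on q V P S"
  unfolding proper_on_def by auto

lemma monochromatic_in_antimono: "S \<subseteq> T \<Longrightarrow> monochromatic_in q V P T e \<subseteq> monochromatic_in q V P S e"
  unfolding monochromatic_in_def using proper_on_antimono by blast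

lemma card_proper_on_insert:
  assumes "finite V"
  shows "card (proper_on q V P S)
           = card (proper_on q V P (insert f S)) + card (monochromatic_in q V P S f)"
proof -
  have "proper_on q V P S = proper_on q V P (insert f S) \<union> monochromatic_in q V P S f"
    and "proper_on q V P (insert f S) \<inter> monochromatic_in q V P S f = {}"
    unfolding proper_on_def monochromatic_in_def by auto
  then show ?thesis
    using assms by (simp add: card_Un_disjoint finite_proper_on finite_monochromatic_in)
qed

lemma proper_on_cong:
  assumes "\<And>x. x \<in> \<Union>S \<Longrightarrow> \<sigma> x = \<tau> x"
  shows "(\<forall>f\<in>S. 1 < card (\<sigma> ` f \<union> P f)) = (\<forall>f\<in>S. 1 < card (\<tau> ` f \<union> P f))"
proof -
  have "\<sigma> ` f = \<tau> ` f" if "f \<in> S" for f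
    using assms that by (intro image_cong) auto
  then show ?thesis by simp
qed

lemma card_proper_on_fixed_colour:
  assumes "v \<in> V" and "c \<in> {1..q}" and "\<forall>f\<in>S. f \<subseteq> V \<and> v \<notin> f"
  shows "card {\<sigma> \<in> proper_on q V P S. \<sigma> v = c} * q = card (proper_on q V P S)"
proof -
  let ?G = "\<lambda>\<sigma>. \<forall>f\<in>S. 1 < card (\<sigma> ` f \<union> P f)"
  let ?rest = "card {\<beta> \<in> V - {v} \<rightarrow>\<^sub>E {1..q}. ?G \<beta>}"
  have G: "\<And>\<sigma> \<tau>. \<forall>x\<in>V - {v}. \<sigma> x = \<tau> x \<Longrightarrow> ?G \<sigma> = ?G \<tau>"
    by (rule proper_on_cong) (use assms(3) in blast)
  have "{\<sigma> \<in> proper_on q V P S. \<sigma> v = c} = {\<sigma> \<in> V \<rightarrow>\<^sub>E {1..q}. \<sigma> v = c \<and> ?G \<sigma>}"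
    by (auto simp: proper_on_def)
  also have "card \<dots> = card {\<alpha> \<in> {v} \<rightarrow>\<^sub>E {1..q}. \<alpha> v = c} * ?rest"
    using assms(1) G by (intro card_PiE_independent) auto
  also have "{\<alpha> \<in> {v} \<rightarrow>\<^sub>E {1..q}. \<alpha> v = c} = {restrict (\<lambda>_. c) {v}}"
    using assms(2) by (auto simp: PiE_iff extensional_def fun_eq_iff)
  moreover have "card (proper_on q V P S) = card {\<alpha> \<in> {v} \<rightarrow>\<^sub>E {1..q}. True} * ?rest"
    unfolding proper_on_def using assms(1) G by (subst card_PiE_independent[symmetric]) auto
  ultimately show ?thesis
    by (simp add: card_PiE)
qed

lemma card_proper_on_fixed_colour_le:
  assumes "v \<in> V" and "c \<in> {1..q}" and "finite V" and "\<forall>f\<in>E. f \<subseteq> V"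
  shows "card {\<sigma> \<in> proper_on q V P E. \<sigma> v = c} * q \<le> card (proper_on q V P {f \<in> E. v \<notin> f})"
proof -
  have "card {\<sigma> \<in> proper_on q V P E. \<sigma> v = c} \<le> card {\<sigma> \<in> proper_on q V P {f \<in> E. v \<notin> f}. \<sigma> v = c}"
    using proper_on_antimono[of "{f \<in> E. v \<notin> f}" E q V P] finite_proper_on[OF assms(3)]
    by (intro card_mono) auto
  also have "\<dots> * q = card (proper_on q V P {f \<in> E. v \<notin> f})"
    using assms by (intro card_proper_on_fixed_colour) auto
  finally show ?thesis by simp
qed

lemma card_monochromatic_in_mult_power_le:
  assumes "finite V" and "e \<subseteq> V" and "e \<noteq> {}" and "finite (P e)"
    and "\<forall>f\<in>S. f \<subseteq> V \<and> f \<inter> e = {}"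
  shows "card (monochromatic_in q V P S e) * q ^ (card e - 1) \<le> card (proper_on q V P S)"
proof -
  let ?A = "\<lambda>\<sigma>. card (\<sigma> ` e \<union> P e) \<le> 1"
  let ?G = "\<lambda>\<sigma>. \<forall>f\<in>S. 1 < card (\<sigma> ` f \<union> P f)"
  let ?rest = "card {\<beta> \<in> V - e \<rightarrow>\<^sub>E {1..q}. ?G \<beta>}"
  have finite_e: "finite e" using assms(1,2) finite_subset by blast
  have A: "\<And>\<sigma> \<tau>. \<forall>x\<in>e. \<sigma> x = \<tau> x \<Longrightarrow> ?A \<sigma> = ?A \<tau>"
    by (metis image_cong)
  have G: "\<And>\<sigma> \<tau>. \<forall>x\<in>V - e. \<sigma> x = \<tau> x \<Longrightarrow> ?G \<sigma> = ?G \<tau>"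
    by (rule proper_on_cong) (use assms(5) in blast)
  have "card (proper_on q V P S) = card {\<alpha> \<in> e \<rightarrow>\<^sub>E {1..q}. True} * ?rest"
    unfolding proper_on_def using assms(2) G by (subst card_PiE_independent[symmetric]) auto
  then have proper: "card (proper_on q V P S) = q ^ card e * ?rest"
    using finite_e by (simp add: card_PiE)
  have "monochromatic_in q V P S e = {\<sigma> \<in> V \<rightarrow>\<^sub>E {1..q}. ?A \<sigma> \<and> ?G \<sigma>}"
    by (auto simp: monochromatic_in_def proper_on_def)
  also have "card \<dots> = card {\<alpha> \<in> e \<rightarrow>\<^sub>E {1..q}. ?A \<alpha>} * ?rest"
    using assms(2) A G by (rule card_PiE_independent)
  also have "\<dots> \<le> q * ?rest"
    using card_PiE_constant_on_le[of _ e "P e" "{1..q}"] assms(3,4) finite_e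
    by (intro mult_right_mono) auto
  finally have "card (monochromatic_in q V P S e) * q ^ (card e - 1) \<le> q * ?rest * q ^ (card e - 1)"
    by (rule mult_right_mono) simp
  also have "\<dots> = card (proper_on q V P S)"
  proof -
    have qpow: "q * q ^ (card e - 1) = q ^ card e"
      using finite_e assms(3) power_minus_mult[of "card e" q]
      by (simp add: card_gt_0_iff mult.commute)
    show ?thesis
      unfolding proper qpow[symmetric] by (simp only: ac_simps)
  qed
  finally show ?thesis .
qed

section \<open>The local lemma count\<close>

lemma card_proper_on_shrink:
  assumes "finite V" and "finite S" and "T \<subseteq> S" and "x \<le> 1"
    and monochromatic: "\<And>S' f. S' \<subseteq> S \<Longrightarrow> f \<in> S - S' \<Longrightarrow>
      real (card (monochromatic_in q V P S' f)) \<le> x * real (card (proper_on q V P S'))"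
  shows "(1 - x) ^ card (S - T) * real (card (proper_on q V P T)) \<le> real (card (proper_on q V P S))"
proof -
  let ?N = "\<lambda>S. real (card (proper_on q V P S))"
  have "(1 - x) ^ card D * ?N T \<le> ?N (T \<union> D)" if "finite D" "D \<subseteq> S - T" for D
    using that
  proof (induction D rule: finite_induct)
    case empty
    show ?case by simp
  next
    case (insert f D)
    then have "(1 - x) ^ card (insert f D) * ?N T = (1 - x) * ((1 - x) ^ card D * ?N T)"
      by simp
    also have "\<dots> \<le> (1 - x) * ?N (T \<union> D)"
      using insert assms(4) by (intro mult_left_mono) auto
    also have "\<dots> \<le> ?N (T \<union> D) - real (card (monochromatic_in q V P (T \<union> D) f))"
      using monochromatic[of "T \<union> D" f] insert assms(3) by (auto simp: algebra_simps)
    also have "\<dots> = ?N (T \<union> insert f D)"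
      using card_proper_on_insert[OF assms(1), of q P "T \<union> D" f] by simp
    finally show ?case .
  qed
  from this[of "S - T"] show ?thesis
    using assms(2,3) by (simp add: Un_absorb1)
qed

lemma card_monochromatic_in_le:
  assumes "finite V" and "finite E"
    and edges: "\<forall>e\<in>E. e \<subseteq> V \<and> e \<noteq> {} \<and> finite (P e)"
    and "0 \<le> x" and "x \<le> 1"
    and lll: "\<forall>e\<in>E. 1 \<le> real q ^ (card e - 1) * x * (1 - x) ^ card (neighbour_edges E e)"
  shows "S \<subseteq> E \<Longrightarrow> e \<in> E - S \<Longrightarrow>
    real (card (monochromatic_in q V P S e)) \<le> x * real (card (proper_on q V P S))"
proof (induction "card S" arbitrary: S e rule: less_induct)
  case less
  let ?N = "\<lambda>S. real (card (proper_on q V P S))"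
  define Far where "Far = {f \<in> S. f \<inter> e = {}}"
  let ?M = "real (card (monochromatic_in q V P Far e))"
  let ?y = "(1 - x) ^ card (neighbour_edges E e)"
  have finite_S: "finite S" using less.prems(1) assms(2) finite_subset by blast
  have "(1 - x) ^ card (S - Far) * ?N Far \<le> ?N S"
  proof (rule card_proper_on_shrink[OF assms(1) finite_S _ assms(5)])
    fix S' f assume "S' \<subseteq> S" "f \<in> S - S'"
    then have "card S' < card S" using finite_S by (intro psubset_card_mono) auto
    then show "real (card (monochromatic_in q V P S' f)) \<le> x * ?N S'"
      by (rule less.hyps) (use \<open>S' \<subseteq> S\<close> \<open>f \<in> S - S'\<close> less.prems(1) in auto)
  qed (simp add: Far_def)
  moreover have "S - Far \<subseteq> neighbour_edges E e"
    using less.prems unfolding neighbour_edges_def Far_def by blast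
  then have "?y \<le> (1 - x) ^ card (S - Far)"
    using assms(2,4,5) by (intro power_decreasing card_mono) (auto simp: neighbour_edges_def)
  then have "?y * ?N Far \<le> (1 - x) ^ card (S - Far) * ?N Far"
    by (rule mult_right_mono) simp
  ultimately have shrink: "?y * ?N Far \<le> ?N S"
    by (rule order_trans[rotated])
  have "card (monochromatic_in q V P S e) \<le> card (monochromatic_in q V P Far e)"
    by (intro card_mono finite_monochromatic_in assms(1) monochromatic_in_antimono)
      (simp add: Far_def)
  then have "real (card (monochromatic_in q V P S e)) \<le> ?M"
    by simp
  also have "\<dots> \<le> ?M * (real q ^ (card e - 1) * x * ?y)"
    using mult_left_mono[of 1 "real q ^ (card e - 1) * x * ?y" ?M] lll less.prems(2) by simp
  also have "\<dots> = x * ?y * (?M * real q ^ (card e - 1))"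
    by (simp add: algebra_simps)
  also have "\<dots> \<le> x * ?y * ?N Far"
  proof (rule mult_left_mono)
    have "card (monochromatic_in q V P Far e) * q ^ (card e - 1) \<le> card (proper_on q V P Far)"
      using edges less.prems
      by (intro card_monochromatic_in_mult_power_le[OF assms(1)]) (auto simp: Far_def)
    then show "?M * real q ^ (card e - 1) \<le> ?N Far"
      unfolding of_nat_le_iff[symmetric, where 'a = real] by simp
  qed (use assms(4,5) in simp)
  also have "\<dots> \<le> x * ?N S"
    using mult_left_mono[OF shrink assms(4)] by (simp only: mult.assoc)
  finally show ?case .
qed

lemma card_proper_on_ge_power_vdegree:
  assumes "finite V" and "finite E"
    and edges: "\<forall>e\<in>E. e \<subseteq> V \<and> e \<noteq> {} \<and> finite (P e)"
    and "0 \<le> x" and "x \<le> 1"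
    and lll: "\<forall>e\<in>E. 1 \<le> real q ^ (card e - 1) * x * (1 - x) ^ card (neighbour_edges E e)"
  shows "(1 - x) ^ vdegree E v * real (card (proper_on q V P {f \<in> E. v \<notin> f}))
           \<le> real (card (proper_on q V P E))"
proof -
  have "E - {f \<in> E. v \<notin> f} = {e \<in> E. v \<in> e}" by blast
  moreover have "(1 - x) ^ card (E - {f \<in> E. v \<notin> f}) * real (card (proper_on q V P {f \<in> E. v \<notin> f}))
      \<le> real (card (proper_on q V P E))"
    using card_monochromatic_in_le[OF assms]
    by (intro card_proper_on_shrink[OF assms(1,2) _ assms(5)]) auto
  ultimately show ?thesis by (simp add: vdegree_def)
qed

lemma card_proper_on_ge_without_edges_at:
  fixes t :: real
  assumes "hypergraph V E" and "\<forall>e\<in>E. P e \<subseteq> {1..q}"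
    and "k' \<le> k" and "2 \<le> k'" and "\<forall>e\<in>E. k' \<le> card e \<and> card e \<le> k" and "real k \<le> t"
    and "(exp 1 * t * real (max_degree V E)) powr (1 / (real k' - 1)) \<le> real q"
    and "1 \<le> q" and "v \<in> V"
  shows "(1 - 1 / t) * real (card (proper_on q V P {f \<in> E. v \<notin> f}))
           \<le> real (card (proper_on q V P E))"
proof -
  define x where "x = 1 / (t * real (max_degree V E))"
  have "finite V" and "\<forall>e\<in>E. e \<subseteq> V"
    using assms(1) by (simp_all add: hypergraph_def)
  have "finite E" using assms(1) by (rule finite_edges)
  have "\<forall>e\<in>E. e \<noteq> {}" and "\<forall>e\<in>E. finite (P e)"
    using assms(2,4,5) finite_subset[of _ "{1..q}"] by fastforce+
  with \<open>\<forall>e\<in>E. e \<subseteq> V\<close> have edges: "\<forall>e\<in>E. e \<subseteq> V \<and> e \<noteq> {} \<and> finite (P e)"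
    by blast
  have "2 \<le> t" using assms(3,4,6) by linarith
  have lll: "\<forall>e\<in>E. 1 \<le> real q ^ (card e - 1) * x * (1 - x) ^ card (neighbour_edges E e)"
    using local_lemma_condition_hypergraph[OF assms(1,5,4,6,7,8)] by (simp add: x_def)
  have "0 \<le> x" and "x \<le> 1"
    using \<open>2 \<le> t\<close> one_div_mult_le_one[of t] by (simp_all add: x_def)
  have "1 - 1 / t \<le> (1 - x) ^ vdegree E v"
    unfolding x_def using \<open>2 \<le> t\<close> vdegree_le_max_degree[OF \<open>finite V\<close> assms(9)]
    by (intro one_minus_inverse_le_power) auto
  then have "(1 - 1 / t) * real (card (proper_on q V P {f \<in> E. v \<notin> f}))
      \<le> (1 - x) ^ vdegree E v * real (card (proper_on q V P {f \<in> E. v \<notin> f}))"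
    by (rule mult_right_mono) simp
  also have "\<dots> \<le> real (card (proper_on q V P E))"
    using \<open>finite V\<close> \<open>finite E\<close> edges \<open>0 \<le> x\<close> \<open>x \<le> 1\<close> lll
    by (rule card_proper_on_ge_power_vdegree)
  finally show ?thesis .
qed

theorem lemma2p3:
  fixes V :: "'a set" and E :: "'a set set" and P :: "'a set \<Rightarrow> nat set"
    and q k k' :: nat and t :: real and v :: 'a and c :: nat
  assumes "hypergraph V E"
    and "\<forall>e\<in>E. P e \<subseteq> {1..q}"
    and "k' \<le> k" and "2 \<le> k'"
    and "\<forall>e\<in>E. k' \<le> card e \<and> card e \<le> k"
    and "real k \<le> t"
    and "real q \<ge> (exp 1 * t * real (max_degree V E)) powr (1 / (real k' - 1))"
    and "v \<in> V" and "c \<in> {1..q}"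
  shows "prob_colour q V E P v c \<le> (1 / real q) * (1 + 4 / t)"
proof -
  have "1 \<le> q" and "2 \<le> t" using assms(3,4,6,9) by auto
  have "card {\<sigma> \<in> proper_on q V P E. \<sigma> v = c} * q \<le> card (proper_on q V P {f \<in> E. v \<notin> f})"
    using assms(1,8,9) by (intro card_proper_on_fixed_colour_le) (auto simp: hypergraph_def)
  moreover have "(1 - 1 / t) * real (card (proper_on q V P {f \<in> E. v \<notin> f}))
      \<le> real (card (proper_on q V P E))"
    using assms(1-7) \<open>1 \<le> q\<close> assms(8) by (rule card_proper_on_ge_without_edges_at)
  ultimately show ?thesis
    unfolding prob_colour_def proper_colourings_eq_proper_on
    using \<open>2 \<le> t\<close> \<open>1 \<le> q\<close>
    by (intro divide_le_of_count_bounds[where b' = "real (card (proper_on q V P {f \<in> E. v \<notin> f}))"])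
      (auto simp flip: of_nat_mult)
qed

end
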